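(* There exist measurable subsets \(A\subset\mathbb{R}^{\mathbb{N}}\) that are atoms for \(\mu\).
   Context: Let $\mathcal{B}$ be the Borel $\sigma$-algebra of $\mathbb{R}$, $\lambda$ the Lebesgue measure, and $\mathcal{B}_{\infty}$ the $\sigma$-algebra on $\mathbb{R}^{\mathbb{N}}$ generated by the cylinder sets $\prod_{i=1}^{m}C_{i}\times\prod_{i=m+1}^{\infty}\mathbb{R}$ with $C_i\in\mathcal{B}$, $m\in\mathbb{N}$. Let $\mathcal{F}(\mathcal{B},\lambda)$ be the set of finite rectangles $\prod_{i\in\mathbb{N}}C_{i}$ with $C_i\in\mathcal{B}$ and $\prod_{i}\lambda(C_i)\in[0,\infty)$, with $\mathrm{vol}(\prod_{i}C_i):=\prod_i\lambda(C_i)$. The measure $\mu$ is the restriction to $\mathcal{B}_{\infty}$ of the outer measure $\mu^{\ast}(A):=\inf\{\sum_{n}\mathrm{vol}(\mathscr{C}_{n}) : \mathscr{C}_{n}\in\mathcal{F}(\mathcal{B},\lambda),\ A\subset\bigcup_{n}\mathscr{C}_{n}\}$ ($\inf\varnothing=\infty$). A measurable set $A$ with $\mu(A)>0$ is an atom if every measurable $B\subset A$ satisfies $\mu(B)\in\{0,\mu(A)\}$. *)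

theory Defs
  imports "HOL-Analysis.Analysis"
begin

text \<open>Points of R^N are functions nat => real; the paper's index i = 1,2,... corresponds
  to index i-1 here.\<close>

definition cyl_sets :: "(nat \<Rightarrow> real) set set" where
  "cyl_sets = {A. \<exists>m C. 1 \<le> m \<and> (\<forall>i<m. C i \<in> sets borel) \<and>
                        A = {x. \<forall>i<m. x i \<in> C i}}"

definition B_inf :: "(nat \<Rightarrow> real) set set" where
  "B_inf = sigma_sets UNIV cyl_sets"

definition vol :: "(nat \<Rightarrow> real set) \<Rightarrow> ennreal" where
  "vol C = lim (\<lambda>n. \<Prod>i<n. emeasure lborel (C i))"

definition finite_rect :: "(nat \<Rightarrow> real set) \<Rightarrow> bool" where
  "finite_rect C \<longleftrightarrow> (\<forall>i. C i \<in> sets borel) \<and>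
     (\<exists>L. (\<lambda>n. \<Prod>i<n. emeasure lborel (C i)) \<longlonglongrightarrow> L \<and> L < \<infinity>)"

text \<open>The outer measure mu*, infimum over countable covers by finite rectangles
  (Inf of the empty set is \<infinity> in ennreal).\<close>
definition mu_outer :: "(nat \<Rightarrow> real) set \<Rightarrow> ennreal" where
  "mu_outer A = (INF R \<in> {R :: nat \<Rightarrow> nat \<Rightarrow> real set.
        (\<forall>n. finite_rect (R n)) \<and> A \<subseteq> (\<Union>n. Pi UNIV (R n))}.
        (\<Sum>n. vol (R n)))"

text \<open>mu is the restriction of mu* to B_infty; atoms of mu.\<close>
definition mu_atom :: "(nat \<Rightarrow> real) set \<Rightarrow> bool" where
  "mu_atom A \<longleftrightarrow> A \<in> B_inf \<and> mu_outer A > 0 \<and>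
     (\<forall>B \<in> B_inf. B \<subseteq> A \<longrightarrow> mu_outer B = 0 \<or> mu_outer B = mu_outer A)"

end

theory Submission
  imports Defs "HOL-Probability.Characteristic_Functions"
begin

(* Take A to be the product of the sides [0, 1/2] at odd coordinates and R at even ones.
   If the side measures of a finite rectangle D have a nonzero (finite) infinite product,
   they tend to 1; intersecting with A then caps every other factor by 1/2, so adjacent
   factors eventually multiply to less than 1 and vol (D \<inter> A) = 0. Hence every subset
   of A that can be covered by finite rectangles is null. But A itself cannot be covered:
   a point of A can avoid the n-th rectangle at coordinate 2n, where that rectangle's side
   has finite measure unless some side is null, and can avoid the countably many null sides
   in every coordinate. So mu A = \<infinity>, and every measurable subset of A has measure
   0 or \<infinity>. *)

lemma LIMSEQ_one_if_prod_tendsto_nonzero: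
  fixes a :: "nat \<Rightarrow> 'a::real_normed_field"
  assumes "(\<lambda>n. \<Prod>i<n. a i) \<longlonglongrightarrow> l" and "l \<noteq> 0"
  shows "a \<longlonglongrightarrow> 1"
proof (rule convergent_prod_imp_LIMSEQ)
  have "raw_has_prod a 0 l"
    using LIMSEQ_Suc[OF assms(1)] assms(2) by (simp add: raw_has_prod_def lessThan_Suc_atMost)
  then show "convergent_prod a"
    unfolding convergent_prod_def by blast
qed

lemma prod_tendsto_zero_if_adjacent_le:
  fixes b :: "nat \<Rightarrow> real"
  assumes nonneg: "\<And>i. 0 \<le> b i" and "c < 1"
    and adjacent: "\<And>n. n \<ge> N \<Longrightarrow> b n * b (Suc n) \<le> c"
  shows "(\<lambda>n. \<Prod>i<n. b i) \<longlonglongrightarrow> 0"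
proof -
  define q where "q n = (\<Prod>i<n. b i)" for n
  have q_nonneg: "0 \<le> q n" for n
    using nonneg by (simp add: q_def prod_nonneg)
  have q_step: "q (Suc (Suc n)) \<le> c * q n" if "n \<ge> N" for n
  proof -
    have "q (Suc (Suc n)) = q n * (b n * b (Suc n))"
      unfolding q_def by (simp add: mult.assoc)
    also have "\<dots> \<le> q n * c"
      using adjacent[OF that] q_nonneg by (rule mult_left_mono)
    finally show ?thesis by (simp add: mult.commute)
  qed
  have subseq_zero: "(\<lambda>k. q (2 * k + j)) \<longlonglongrightarrow> 0" for j
  proof (rule summable_LIMSEQ_zero, rule summable_ratio_test)
    fix k assume "k \<ge> N"
    then have "q (Suc (Suc (2 * k + j))) \<le> c * q (2 * k + j)"
      by (intro q_step) linarith
    then show "norm (q (2 * Suc k + j)) \<le> c * norm (q (2 * k + j))"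
      using q_nonneg by simp
  qed (fact \<open>c < 1\<close>)
  have "q \<longlonglongrightarrow> 0"
  proof (rule limseq_even_odd)
    show "(\<lambda>n. q (2 * n)) \<longlonglongrightarrow> 0"
      using subseq_zero[of 0] by simp
  qed (fact subseq_zero)
  then show ?thesis
    by (simp add: q_def[abs_def])
qed

lemma prod_tendsto_zero_if_odd_factors_le:
  fixes a b :: "nat \<Rightarrow> real"
  assumes nonneg: "\<And>i. 0 \<le> b i" and le: "\<And>i. b i \<le> a i"
    and odd_le: "\<And>i. odd i \<Longrightarrow> b i \<le> c" and "c < 1"
    and prod_a: "(\<lambda>n. \<Prod>i<n. a i) \<longlonglongrightarrow> l"
  shows "(\<lambda>n. \<Prod>i<n. b i) \<longlonglongrightarrow> 0"
proof (cases "l = 0")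
  case True
  show ?thesis
  proof (rule tendsto_sandwich[OF _ _ tendsto_const])
    show "\<forall>\<^sub>F n in sequentially. 0 \<le> (\<Prod>i<n. b i)"
      using nonneg by (simp add: prod_nonneg)
    show "\<forall>\<^sub>F n in sequentially. (\<Prod>i<n. b i) \<le> (\<Prod>i<n. a i)"
      using nonneg le by (simp add: prod_mono)
  qed (use prod_a True in simp)
next
  case False
  have "0 \<le> c"
    using nonneg[of 1] odd_le[of 1] by simp
  define d where "d = 2 / (1 + c)"
  have "1 < d" and "c * d < 1"
    using \<open>0 \<le> c\<close> \<open>c < 1\<close> by (simp_all add: d_def field_simps)
  have "a \<longlonglongrightarrow> 1"
    using prod_a False by (rule LIMSEQ_one_if_prod_tendsto_nonzero)
  then have "\<forall>\<^sub>F n in sequentially. a n < d"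
    using \<open>1 < d\<close> by (rule order_tendstoD(2))
  then obtain N where a_le: "\<And>n. n \<ge> N \<Longrightarrow> a n \<le> d"
    unfolding eventually_sequentially by (meson less_imp_le)
  have "b n * b (Suc n) \<le> c * d" if "n \<ge> N" for n
  proof (cases "odd n")
    case True
    have "b (Suc n) \<le> d"
      using le[of "Suc n"] a_le[of "Suc n"] that by linarith
    with odd_le[OF True] show ?thesis
      using nonneg \<open>0 \<le> c\<close> by (intro mult_mono)
  next
    case False
    have "b n \<le> d"
      using le[of n] a_le[of n] that by linarith
    then have "b n * b (Suc n) \<le> d * c"
      using odd_le[of "Suc n"] False nonneg \<open>1 < d\<close> by (intro mult_mono) auto
    then show ?thesis by (simp add: mult.commute)
  qed
  with nonneg \<open>c * d < 1\<close> show ?thesis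
    by (rule prod_tendsto_zero_if_adjacent_le)
qed

lemma ennreal_prod_tendsto_finite_imp_factor_finite:
  fixes a :: "nat \<Rightarrow> ennreal"
  assumes prod_a: "(\<lambda>n. \<Prod>i<n. a i) \<longlonglongrightarrow> L" and "L < \<infinity>" and nonzero: "\<And>i. a i \<noteq> 0"
  shows "a j < \<infinity>"
proof -
  have "a j \<noteq> \<infinity>"
  proof
    assume "a j = \<infinity>"
    then have "(\<Prod>i<n. a i) = \<infinity>" if "j < n" for n
      using that nonzero by (auto simp: ennreal_prod_eq_top)
    then have "(\<lambda>n. \<Prod>i<n. a i) \<longlonglongrightarrow> \<infinity>"
      by (intro tendsto_eventually) (auto simp: eventually_sequentially intro!: exI[of _ "Suc j"])
    with prod_a have "L = \<infinity>"
      by (rule LIMSEQ_unique)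
    with \<open>L < \<infinity>\<close> show False
      by simp
  qed
  then show ?thesis
    by (simp add: top.not_eq_extremum)
qed

lemma ennreal_prod_tendsto_zero_if_odd_factors_le:
  fixes a b :: "nat \<Rightarrow> ennreal" and c :: ennreal
  assumes le: "\<And>i. b i \<le> a i" and odd_le: "\<And>i. odd i \<Longrightarrow> b i \<le> c" and "c < 1"
    and prod_a: "(\<lambda>n. \<Prod>i<n. a i) \<longlonglongrightarrow> L" and "L < \<infinity>"
  shows "(\<lambda>n. \<Prod>i<n. b i) \<longlonglongrightarrow> 0"
proof (cases "\<exists>j. a j = 0")
  case True
  then obtain j where "a j = 0" ..
  then have "(\<Prod>i<n. b i) = 0" if "j < n" for n
    using that le[of j] by (auto simp: prod_zero_iff)
  then show ?thesis
    by (intro tendsto_eventually) (auto simp: eventually_sequentially intro!: exI[of _ "Suc j"])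
next
  case False
  then have a_finite: "a i < \<infinity>" for i
    using ennreal_prod_tendsto_finite_imp_factor_finite[OF prod_a \<open>L < \<infinity>\<close>] by simp
  then have b_finite: "b i < \<infinity>" for i
    using le[of i] by (rule le_less_trans[rotated])
  define a' b' where "a' i = enn2real (a i)" and "b' i = enn2real (b i)" for i
  have a_eq: "a i = ennreal (a' i)" and b_eq: "b i = ennreal (b' i)" for i
    using a_finite[of i] b_finite[of i] by (simp_all add: a'_def b'_def ennreal_enn2real_if)
  have a'_nonneg: "0 \<le> a' i" and b'_nonneg: "0 \<le> b' i" for i
    by (simp_all add: a'_def b'_def)
  have "(\<lambda>n. enn2real (\<Prod>i<n. a i)) \<longlonglongrightarrow> enn2real L"
    using prod_a \<open>L < \<infinity>\<close> by (intro tendsto_enn2real) auto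
  then have prod_a': "(\<lambda>n. \<Prod>i<n. a' i) \<longlonglongrightarrow> enn2real L"
    by (simp add: a_eq prod_ennreal prod_nonneg a'_nonneg)
  have le': "b' i \<le> a' i" for i
    using le[of i] a_finite[of i] by (simp add: a'_def b'_def enn2real_mono)
  have odd_le': "b' i \<le> enn2real c" if "odd i" for i
    unfolding b'_def using odd_le[OF that] \<open>c < 1\<close> ennreal_one_less_top
    by (intro enn2real_mono) (auto intro: order.strict_trans)
  have "enn2real c < 1"
    using \<open>c < 1\<close> by (cases c) auto
  from prod_tendsto_zero_if_odd_factors_le[OF b'_nonneg le' odd_le' this prod_a']
  have "(\<lambda>n. \<Prod>i<n. b' i) \<longlonglongrightarrow> 0" .
  then have "(\<lambda>n. ennreal (\<Prod>i<n. b' i)) \<longlonglongrightarrow> ennreal 0"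
    by (rule tendsto_ennrealI)
  then show ?thesis
    by (simp add: b_eq prod_ennreal b'_nonneg)
qed

lemma not_subset_Un_null_set_if_emeasure_less:
  assumes "S \<in> sets M" and "F \<in> sets M" and "Z \<in> null_sets M"
    and "emeasure M F < emeasure M S"
  shows "\<not> S \<subseteq> F \<union> Z"
proof
  assume "S \<subseteq> F \<union> Z"
  then have "emeasure M S \<le> emeasure M (F \<union> Z)"
    using assms by (intro emeasure_mono) auto
  also have "\<dots> = emeasure M F"
    using assms(2,3) by (rule emeasure_Un_null_set)
  finally show False
    using assms(4) by simp
qed

definition atom_side :: "nat \<Rightarrow> real set" where
  "atom_side i = (if odd i then {0..1/2} else UNIV)"

definition atom_set :: "(nat \<Rightarrow> real) set" where
  "atom_set = Pi UNIV atom_side"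

lemma atom_side_borel [measurable]: "atom_side i \<in> sets borel"
  by (simp add: atom_side_def)

lemma atom_set_in_B_inf: "atom_set \<in> B_inf"
proof -
  have "{x. \<forall>i<Suc k. x i \<in> atom_side i} \<in> cyl_sets" for k
    unfolding cyl_sets_def by (intro CollectI exI[of _ "Suc k"] exI[of _ atom_side]) auto
  then have "(\<Inter>k. {x. \<forall>i<Suc k. x i \<in> atom_side i}) \<in> sigma_sets UNIV cyl_sets"
    by (intro sigma_sets_Inter sigma_sets.Basic) auto
  also have "(\<Inter>k. {x. \<forall>i<Suc k. x i \<in> atom_side i}) = atom_set"
    by (auto simp: atom_set_def)
  finally show ?thesis
    unfolding B_inf_def .
qed

lemma finite_rect_Int_atom_side:
  assumes "finite_rect D"
  shows "finite_rect (\<lambda>i. D i \<inter> atom_side i)" and "vol (\<lambda>i. D i \<inter> atom_side i) = 0"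
proof -
  have D_borel: "D i \<in> sets borel" for i
    using assms by (simp add: finite_rect_def)
  obtain L where prod_D: "(\<lambda>n. \<Prod>i<n. emeasure lborel (D i)) \<longlonglongrightarrow> L" and "L < \<infinity>"
    using assms unfolding finite_rect_def by blast
  have "emeasure lborel (D i \<inter> atom_side i) \<le> emeasure lborel (D i)" for i
    using D_borel by (intro emeasure_mono) auto
  moreover have "emeasure lborel (D i \<inter> atom_side i) \<le> ennreal (1/2)" if "odd i" for i
  proof -
    have "emeasure lborel (D i \<inter> atom_side i) \<le> emeasure lborel {0..1/2::real}"
      using that by (intro emeasure_mono) (auto simp: atom_side_def)
    then show ?thesis
      by simp
  qed
  moreover have "ennreal (1/2) < 1"
    using ennreal_lessI[of 1 "1/2"] by simp
  ultimately have "(\<lambda>n. \<Prod>i<n. emeasure lborel (D i \<inter> atom_side i)) \<longlonglongrightarrow> 0"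
    using prod_D \<open>L < \<infinity>\<close> by (rule ennreal_prod_tendsto_zero_if_odd_factors_le)
  then show "finite_rect (\<lambda>i. D i \<inter> atom_side i)" and "vol (\<lambda>i. D i \<inter> atom_side i) = 0"
    using D_borel by (auto simp: finite_rect_def vol_def limI)
qed

lemma mu_outer_le_cover:
  fixes R :: "nat \<Rightarrow> nat \<Rightarrow> real set"
  assumes "\<And>n. finite_rect (R n)" and "B \<subseteq> (\<Union>n. Pi UNIV (R n))"
  shows "mu_outer B \<le> (\<Sum>n. vol (R n))"
  unfolding mu_outer_def by (rule INF_lower) (use assms in blast)

lemma mu_outer_eq_top_if_no_cover:
  assumes "\<nexists>R :: nat \<Rightarrow> nat \<Rightarrow> real set. (\<forall>n. finite_rect (R n)) \<and> B \<subseteq> (\<Union>n. Pi UNIV (R n))"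
  shows "mu_outer B = \<infinity>"
proof -
  have "{R :: nat \<Rightarrow> nat \<Rightarrow> real set. (\<forall>n. finite_rect (R n)) \<and> B \<subseteq> (\<Union>n. Pi UNIV (R n))} = {}"
    using assms by blast
  then show ?thesis
    unfolding mu_outer_def by (simp only: image_empty Inf_empty) simp
qed

lemma mu_outer_eq_0_if_covered_subset_atom_set:
  fixes R :: "nat \<Rightarrow> nat \<Rightarrow> real set"
  assumes "B \<subseteq> atom_set" and "\<And>n. finite_rect (R n)" and "B \<subseteq> (\<Union>n. Pi UNIV (R n))"
  shows "mu_outer B = 0"
proof -
  define R' where "R' n = (\<lambda>i. R n i \<inter> atom_side i)" for n
  have "B \<subseteq> (\<Union>n. Pi UNIV (R' n))"
  proof
    fix x assume "x \<in> B"
    then obtain n where "x \<in> Pi UNIV (R n)" and "x \<in> atom_set"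
      using assms(1,3) by blast
    then have "x \<in> Pi UNIV (R' n)"
      by (auto simp: R'_def atom_set_def Pi_iff)
    then show "x \<in> (\<Union>n. Pi UNIV (R' n))"
      by blast
  qed
  then have "mu_outer B \<le> (\<Sum>n. vol (R' n))"
    using finite_rect_Int_atom_side(1)[OF assms(2)] by (intro mu_outer_le_cover) (auto simp: R'_def)
  also have "\<dots> = 0"
    using finite_rect_Int_atom_side(2)[OF assms(2)] by (simp add: R'_def)
  finally show ?thesis
    by simp
qed

lemma atom_set_not_covered:
  fixes R :: "nat \<Rightarrow> nat \<Rightarrow> real set"
  assumes rect: "\<And>n. finite_rect (R n)"
  shows "\<not> atom_set \<subseteq> (\<Union>n. Pi UNIV (R n))"
proof
  assume cover: "atom_set \<subseteq> (\<Union>n. Pi UNIV (R n))"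
  have R_borel: "R n i \<in> sets borel" for n i
    using rect[of n] by (simp add: finite_rect_def)
  define Z where "Z j = (\<Union>n\<in>{n. R n j \<in> null_sets lborel}. R n j)" for j
  define F where "F j = (if even j \<and> emeasure lborel (R (j div 2) j) < \<infinity> then R (j div 2) j else {})"
    for j
  have "\<exists>y. y \<in> atom_side j \<and> y \<notin> F j \<union> Z j" for j
  proof -
    have "Z j \<in> null_sets lborel"
      unfolding Z_def by (intro null_sets_UN') auto
    moreover have "F j \<in> sets lborel"
      by (simp add: F_def R_borel)
    moreover have "emeasure lborel (F j) < emeasure lborel (atom_side j)"
      by (cases "even j") (auto simp: F_def atom_side_def ennreal_inverse_positive)
    ultimately have "\<not> atom_side j \<subseteq> F j \<union> Z j"
      by (intro not_subset_Un_null_set_if_emeasure_less) auto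
    then show ?thesis
      by blast
  qed
  then obtain x where "\<And>j. x j \<in> atom_side j" and x_avoids: "\<And>j. x j \<notin> F j \<union> Z j"
    by metis
  then have "x \<in> atom_set"
    by (simp add: atom_set_def)
  with cover obtain n where x_in: "x \<in> Pi UNIV (R n)"
    by blast
  show False
  proof (cases "\<exists>j. R n j \<in> null_sets lborel")
    case True
    then obtain j where "R n j \<in> null_sets lborel" ..
    then have "R n j \<subseteq> Z j"
      by (auto simp: Z_def)
    with x_in x_avoids[of j] show False
      by auto
  next
    case False
    then have nonzero: "emeasure lborel (R n i) \<noteq> 0" for i
      using R_borel by (auto simp: null_sets_def)
    obtain L where "(\<lambda>m. \<Prod>i<m. emeasure lborel (R n i)) \<longlonglongrightarrow> L" and "L < \<infinity>"
      using rect[of n] unfolding finite_rect_def by blast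
    then have "emeasure lborel (R n (2 * n)) < \<infinity>"
      using nonzero by (rule ennreal_prod_tendsto_finite_imp_factor_finite)
    then have "F (2 * n) = R n (2 * n)"
      by (simp add: F_def)
    with x_in x_avoids[of "2 * n"] show False
      by auto
  qed
qed

theorem propositionA2:
  shows "\<exists>A. mu_atom A"
proof -
  have atom_set_top: "mu_outer atom_set = \<infinity>"
    using atom_set_not_covered by (intro mu_outer_eq_top_if_no_cover) blast
  have "mu_atom atom_set"
    unfolding mu_atom_def
  proof (intro conjI ballI impI)
    show "atom_set \<in> B_inf"
      by (rule atom_set_in_B_inf)
    show "0 < mu_outer atom_set"
      by (simp add: atom_set_top)
    fix B assume "B \<subseteq> atom_set"
    then show "mu_outer B = 0 \<or> mu_outer B = mu_outer atom_set"
      using mu_outer_eq_0_if_covered_subset_atom_set mu_outer_eq_top_if_no_cover atom_set_top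
      by metis
  qed
  then show ?thesis ..
qed

end
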